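(* Let $m,n$ be integers with $3\leq m\leq n$ and $n\equiv -1 \pmod m$. Then every $(m,n;6)$-bipartite biregular graph has at least $\left(\frac{n}{m}+1\right)(n+1)(m-1)$ vertices, i.e. $B_c(m,n;6)\geq \left(\frac{n}{m}+1\right)(n+1)(m-1)$. Moreover, if a Steiner system $S(2,m,n(m-1)+m)$ exists, then deleting one point of it together with all blocks containing that point yields an incidence structure whose incidence graph is an $(m,n;6)$-bipartite biregular graph on exactly $\left(\frac{n}{m}+1\right)(n+1)(m-1)$ vertices; in that case this graph is an $(m,n;6)$-bipartite biregular cage and $B_c(m,n;6)=\left(\frac{n}{m}+1\right)(n+1)(m-1)$.
   Context: For integers $a,b\geq 2$ and even $g\ge 4$, an $(a,b;g)$-bipartite biregular graph is a finite simple bipartite graph of girth exactly $g$ in which all vertices of one bipartition class have degree $a$ and all vertices of the other class have degree $b$. An $(a,b;g)$-bipartite biregular cage is such a graph of minimum possible order, and $B_c(a,b;g)$ denotes this minimum order. A Steiner system $S(2,k,v)$ is a set of $v$ points together with a family of $k$-element subsets (blocks) such that every pair of distinct points lies in exactly one block. The incidence graph of a point-block structure is the bipartite graph on points and blocks with a point adjacent to a block iff the point lies in the block. *)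

theory Defs
  imports Complex_Main "HOL-Number_Theory.Cong"
begin

definition simple_graph :: "'a set \<Rightarrow> ('a \<Rightarrow> 'a \<Rightarrow> bool) \<Rightarrow> bool" where
  "simple_graph V E \<longleftrightarrow> finite V \<and> (\<forall>x y. E x y \<longrightarrow> x \<in> V \<and> y \<in> V)
     \<and> (\<forall>x y. E x y \<longrightarrow> E y x) \<and> (\<forall>x. \<not> E x x)"

definition degree :: "'a set \<Rightarrow> ('a \<Rightarrow> 'a \<Rightarrow> bool) \<Rightarrow> 'a \<Rightarrow> nat" where
  "degree V E x = card {y \<in> V. E x y}"

definition has_cycle_of_length :: "'a set \<Rightarrow> ('a \<Rightarrow> 'a \<Rightarrow> bool) \<Rightarrow> nat \<Rightarrow> bool" where
  "has_cycle_of_length V E k \<longleftrightarrow> 3 \<le> k \<and> (\<exists>xs. length xs = k \<and> distinct xs \<and> set xs \<subseteq> V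
     \<and> (\<forall>i<k. E (xs ! i) (xs ! ((i + 1) mod k))))"

definition has_girth :: "'a set \<Rightarrow> ('a \<Rightarrow> 'a \<Rightarrow> bool) \<Rightarrow> nat \<Rightarrow> bool" where
  "has_girth V E g \<longleftrightarrow> has_cycle_of_length V E g \<and> (\<forall>k<g. \<not> has_cycle_of_length V E k)"

definition bipartite_biregular :: "nat \<Rightarrow> nat \<Rightarrow> nat \<Rightarrow> 'a set \<Rightarrow> ('a \<Rightarrow> 'a \<Rightarrow> bool) \<Rightarrow> bool" where
  "bipartite_biregular a b g V E \<longleftrightarrow> simple_graph V E \<and>
     (\<exists>A B. A \<union> B = V \<and> A \<inter> B = {} \<and>
        (\<forall>x y. E x y \<longrightarrow> (x \<in> A \<and> y \<in> B) \<or> (x \<in> B \<and> y \<in> A)) \<and>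
        (\<forall>x\<in>A. degree V E x = a) \<and> (\<forall>x\<in>B. degree V E x = b)) \<and>
     has_girth V E g"

text \<open>B_c(a,b;g): minimum order. Every finite graph is isomorphic to one with vertices
  in nat, so minimising over graphs on nat is the same as over all graphs.\<close>
definition Bc :: "nat \<Rightarrow> nat \<Rightarrow> nat \<Rightarrow> nat" where
  "Bc a b g = (LEAST N. \<exists>(V::nat set) E. bipartite_biregular a b g V E \<and> card V = N)"

definition is_bb_cage :: "nat \<Rightarrow> nat \<Rightarrow> nat \<Rightarrow> 'a set \<Rightarrow> ('a \<Rightarrow> 'a \<Rightarrow> bool) \<Rightarrow> bool" where
  "is_bb_cage a b g V E \<longleftrightarrow> bipartite_biregular a b g V E \<and> card V = Bc a b g"

definition steiner_system_2 :: "nat \<Rightarrow> nat \<Rightarrow> 'p set \<Rightarrow> 'p set set \<Rightarrow> bool" where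
  "steiner_system_2 k v P Bl \<longleftrightarrow> finite P \<and> card P = v \<and>
     (\<forall>B\<in>Bl. B \<subseteq> P \<and> card B = k) \<and>
     (\<forall>x\<in>P. \<forall>y\<in>P. x \<noteq> y \<longrightarrow> (\<exists>!B. B \<in> Bl \<and> x \<in> B \<and> y \<in> B))"

definition inc_vertices :: "'p set \<Rightarrow> 'p set set \<Rightarrow> ('p + 'p set) set" where
  "inc_vertices P Bl = Inl ` P \<union> Inr ` Bl"

definition inc_edges :: "'p set \<Rightarrow> 'p set set \<Rightarrow> ('p + 'p set) \<Rightarrow> ('p + 'p set) \<Rightarrow> bool" where
  "inc_edges P Bl u w \<longleftrightarrow> (\<exists>x B. x \<in> P \<and> B \<in> Bl \<and> x \<in> B \<and>
      ((u = Inl x \<and> w = Inr B) \<or> (u = Inr B \<and> w = Inl x)))"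

definition del_points :: "'p set \<Rightarrow> 'p \<Rightarrow> 'p set" where
  "del_points P p = P - {p}"

definition del_blocks :: "'p set set \<Rightarrow> 'p \<Rightarrow> 'p set set" where
  "del_blocks Bl p = {B \<in> Bl. p \<notin> B}"

end

theory Submission
  imports Defs
begin

text \<open>Let A and B be the classes of degree m and n. Double counting edges gives
  |A| m = |B| n, so |V| = |B| (n/m + 1). Girth 6 forces the vertices at distance at most 2
  from a vertex of B to be distinct, hence |B| \<ge> 1 + n(m - 1). Since m divides n + 1, it is
  coprime to n and therefore divides |B|; the least multiple of m that is at least
  1 + n(m - 1) is (n + 1)(m - 1), which gives the lower bound.

  Deleting a point p of an S(2, m, n(m - 1) + m) together with the n + 1 blocks through it
  leaves (n + 1)(m - 1) points, each on n remaining blocks of size m. Two points share at most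
  one block, so the incidence graph has no 4-cycle, and three non-collinear points avoiding
  the blocks through p give a 6-cycle.\<close>

section \<open>Bipartite biregular graphs\<close>

definition bipartition :: "'a set \<Rightarrow> ('a \<Rightarrow> 'a \<Rightarrow> bool) \<Rightarrow> 'a set \<Rightarrow> 'a set \<Rightarrow> bool" where
  "bipartition V E A B \<longleftrightarrow> A \<union> B = V \<and> A \<inter> B = {} \<and>
     (\<forall>x y. E x y \<longrightarrow> (x \<in> A \<and> y \<in> B) \<or> (x \<in> B \<and> y \<in> A))"

definition biregular_bipartition ::
    "nat \<Rightarrow> nat \<Rightarrow> 'a set \<Rightarrow> ('a \<Rightarrow> 'a \<Rightarrow> bool) \<Rightarrow> 'a set \<Rightarrow> 'a set \<Rightarrow> bool" where
  "biregular_bipartition a b V E A B \<longleftrightarrow> bipartition V E A B \<and>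
     (\<forall>x\<in>A. degree V E x = a) \<and> (\<forall>x\<in>B. degree V E x = b)"

lemma bipartite_biregular_iff:
  "bipartite_biregular a b g V E \<longleftrightarrow>
     simple_graph V E \<and> (\<exists>A B. biregular_bipartition a b V E A B) \<and> has_girth V E g"
  unfolding bipartite_biregular_def biregular_bipartition_def bipartition_def by blast

lemma simple_graphD:
  assumes "simple_graph V E"
  shows "finite V" and "E x y \<Longrightarrow> x \<in> V" and "E x y \<Longrightarrow> y \<in> V"
    and "E x y \<Longrightarrow> E y x" and "\<not> E x x"
  using assms unfolding simple_graph_def by blast+

lemma successively_iff_nth:
  "successively P xs \<longleftrightarrow> (\<forall>i. Suc i < length xs \<longrightarrow> P (xs ! i) (xs ! Suc i))"
  by (induction P xs rule: successively.induct) (auto simp: nth_Cons split: nat.splits)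

lemma successively_closed_iff_nth:
  assumes "xs \<noteq> []"
  shows "successively E (xs @ [hd xs]) \<longleftrightarrow>
           (\<forall>i<length xs. E (xs ! i) (xs ! ((i + 1) mod length xs)))"
  using assms by (auto simp: successively_iff_nth nth_append hd_conv_nth mod_if)

text \<open>Cycles as closed walks xs @ [hd xs], so that explicit short cycles unfold by simp.\<close>

lemma has_cycle_of_length_iff:
  "has_cycle_of_length V E k \<longleftrightarrow> 3 \<le> k \<and>
     (\<exists>xs. length xs = k \<and> distinct xs \<and> set xs \<subseteq> V \<and> successively E (xs @ [hd xs]))"
  unfolding has_cycle_of_length_def
  by (metis successively_closed_iff_nth list.size(3) not_numeral_le_zero)

lemma has_cycle_of_length_4_iff:
  assumes G: "simple_graph V E"
  shows "has_cycle_of_length V E 4 \<longleftrightarrow>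
           (\<exists>u c v d. u \<noteq> v \<and> c \<noteq> d \<and> E u c \<and> E c v \<and> E v d \<and> E d u)"
proof
  assume "has_cycle_of_length V E 4"
  then obtain xs where xs: "length xs = 4" "distinct xs" "successively E (xs @ [hd xs])"
    unfolding has_cycle_of_length_iff by blast
  then obtain u c v d where "xs = [u, c, v, d]"
    by (auto simp: numeral_eq_Suc length_Suc_conv)
  with xs show "\<exists>u c v d. u \<noteq> v \<and> c \<noteq> d \<and> E u c \<and> E c v \<and> E v d \<and> E d u"
    by auto
next
  assume "\<exists>u c v d. u \<noteq> v \<and> c \<noteq> d \<and> E u c \<and> E c v \<and> E v d \<and> E d u"
  then obtain u c v d where "u \<noteq> v" "c \<noteq> d" "E u c" "E c v" "E v d" "E d u"
    by blast
  with simple_graphD[OF G] show "has_cycle_of_length V E 4"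
    unfolding has_cycle_of_length_iff by (intro conjI exI[of _ "[u, c, v, d]"]) auto
qed

lemma bipartition_cycle_even:
  assumes bip: "bipartition V E A B" and cyc: "has_cycle_of_length V E k"
  shows "even k"
proof -
  obtain xs where k: "3 \<le> k" and step: "\<And>i. i < k \<Longrightarrow> E (xs ! i) (xs ! ((i + 1) mod k))"
    using cyc unfolding has_cycle_of_length_def by blast
  have switch: "x \<in> A \<longleftrightarrow> y \<notin> A" if "E x y" for x y
    using bip that unfolding bipartition_def by blast
  have alternate: "xs ! i \<in> A \<longleftrightarrow> (xs ! 0 \<in> A \<longleftrightarrow> even i)" if "i < k" for i
    using that
  proof (induction i)
    case (Suc i)
    then have "E (xs ! i) (xs ! Suc i)" using step[of i] by simp
    with Suc show ?case using switch by auto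
  qed simp
  have "E (xs ! (k - 1)) (xs ! 0)" using step[of "k - 1"] k by simp
  then show "even k" using alternate[of "k - 1"] switch k by auto
qed

lemma has_girth_6I:
  assumes "bipartition V E A B" "\<not> has_cycle_of_length V E 4" "has_cycle_of_length V E 6"
  shows "has_girth V E 6"
  unfolding has_girth_def
proof (intro conjI allI impI notI)
  fix k :: nat assume "k < 6" "has_cycle_of_length V E k"
  moreover from this(2) have "3 \<le> k" "even k"
    using bipartition_cycle_even[OF assms(1)] unfolding has_cycle_of_length_def by blast+
  ultimately have "k = 4" by presburger
  with \<open>has_cycle_of_length V E k\<close> show False using assms(2) by simp
qed (rule assms(3))

lemma biregular_bipartition_edge_count:
  assumes G: "simple_graph V E" and AB: "biregular_bipartition a b V E A B"
  shows "card A * a = card B * b"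
proof -
  have bip: "A \<union> B = V" "A \<inter> B = {}" "\<And>x y. E x y \<Longrightarrow> (x \<in> A \<and> y \<in> B) \<or> (x \<in> B \<and> y \<in> A)"
    using AB unfolding biregular_bipartition_def bipartition_def by blast+
  have fin: "finite A" "finite B" using bip(1) simple_graphD(1)[OF G] by auto
  have "card A * a = (\<Sum>x\<in>A. card {y \<in> B. E x y})"
  proof -
    have "{y \<in> V. E x y} = {y \<in> B. E x y}" if "x \<in> A" for x
      using that bip by blast
    then show ?thesis using AB unfolding biregular_bipartition_def degree_def by simp
  qed
  also have "\<dots> = (\<Sum>y\<in>B. card {x \<in> A. E x y})"
    using sum.swap_restrict[OF fin, of "\<lambda>_ _. 1::nat" E] by simp
  also have "\<dots> = card B * b"
  proof -
    have "{x \<in> V. E y x} = {x \<in> A. E x y}" if "y \<in> B" for y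
      using that bip simple_graphD(4)[OF G] by blast
    then show ?thesis using AB unfolding biregular_bipartition_def degree_def by simp
  qed
  finally show ?thesis .
qed

lemma card_vertices_biregular_bipartition:
  assumes G: "simple_graph V E" and AB: "biregular_bipartition a b V E A B" and "0 < a"
  shows "real (card V) = (real b / real a + 1) * real (card B)"
proof -
  have "A \<union> B = V" "A \<inter> B = {}"
    using AB unfolding biregular_bipartition_def bipartition_def by blast+
  then have "card V = card A + card B"
    using simple_graphD(1)[OF G] by (metis card_Un_disjoint finite_Un)
  moreover have "real (card A) * real a = real (card B) * real b"
    using biregular_bipartition_edge_count[OF G AB] by (metis of_nat_mult)
  ultimately show ?thesis using \<open>0 < a\<close> by (simp add: field_simps)
qed

lemma card_two_step_neighbourhood:
  assumes G: "simple_graph V E" and no4: "\<not> has_cycle_of_length V E 4"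
    and dv: "degree V E v = n" and du: "\<And>u. E v u \<Longrightarrow> degree V E u = m"
  shows "card (insert v (\<Union>u\<in>{u \<in> V. E v u}. {w \<in> V. E u w})) = 1 + n * (m - 1)"
proof -
  define N where "N u = {w \<in> V. E u w}" for u
  have fin: "finite (N u)" for u using simple_graphD(1)[OF G] unfolding N_def by simp
  have "(N u1 - {v}) \<inter> (N u2 - {v}) = {}" if "u1 \<in> N v" "u2 \<in> N v" "u1 \<noteq> u2" for u1 u2
    \<comment> \<open>a common neighbour w \<noteq> v of u1 and u2 would close the 4-cycle v u1 w u2\<close>
    using no4 that simple_graphD(4)[OF G] unfolding has_cycle_of_length_4_iff[OF G] N_def by blast
  then have "card (\<Union>u\<in>N v. N u - {v}) = (\<Sum>u\<in>N v. card (N u - {v}))"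
    using fin by (intro card_UN_disjoint) auto
  also have "\<dots> = (\<Sum>u\<in>N v. m - 1)"
  proof (rule sum.cong)
    fix u assume "u \<in> N v"
    then have "v \<in> N u" "card (N u) = m"
      using du simple_graphD[OF G] unfolding N_def degree_def by auto
    then show "card (N u - {v}) = m - 1" using fin by simp
  qed simp
  also have "\<dots> = n * (m - 1)" using dv unfolding degree_def N_def by simp
  finally have "card (insert v (\<Union>u\<in>N v. N u - {v})) = 1 + n * (m - 1)"
    using fin simple_graphD(1)[OF G] unfolding N_def by (subst card_insert_disjoint) auto
  moreover have "insert v (\<Union>u\<in>N v. N u - {v}) = insert v (\<Union>u\<in>N v. N u)" by blast
  ultimately show ?thesis unfolding N_def by simp
qed

lemma least_multiple_le:
  fixes m b c l :: nat
  assumes "m dvd c" "c < l + m" "m dvd b" "l \<le> b"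
  shows "c \<le> b"
proof -
  obtain s t where st: "c = m * s" "b = m * t" using assms(1,3) by (auto elim!: dvdE)
  then have "m * s < m * (t + 1)" using assms(2,4) by simp
  then have "s < t + 1" using mult_less_cancel1 by blast
  then show ?thesis using st by simp
qed

lemma biregular_bipartition_moore_bound:
  assumes G: "simple_graph V E" and AB: "biregular_bipartition m n V E A B"
    and no4: "\<not> has_cycle_of_length V E 4" and v: "v \<in> B"
  shows "1 + n * (m - 1) \<le> card B"
proof -
  have bip: "A \<union> B = V" "A \<inter> B = {}" "\<And>x y. E x y \<Longrightarrow> (x \<in> A \<and> y \<in> B) \<or> (x \<in> B \<and> y \<in> A)"
    and degA: "\<And>x. x \<in> A \<Longrightarrow> degree V E x = m" and degB: "\<And>x. x \<in> B \<Longrightarrow> degree V E x = n"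
    using AB unfolding biregular_bipartition_def bipartition_def by blast+
  define S where "S = insert v (\<Union>u\<in>{u \<in> V. E v u}. {w \<in> V. E u w})"
  have "S \<subseteq> B" using v bip(2,3) unfolding S_def by blast
  moreover have "finite B" using bip(1) simple_graphD(1)[OF G] by auto
  moreover have "card S = 1 + n * (m - 1)" unfolding S_def
  proof (rule card_two_step_neighbourhood[OF G no4])
    show "degree V E v = n" using degB v .
    show "degree V E u = m" if "E v u" for u using degA bip(2,3) that v by blast
  qed
  ultimately show ?thesis by (metis card_mono)
qed

lemma card_bipartite_biregular_girth_6_ge:
  assumes dvd: "m dvd n + 1" and G: "bipartite_biregular m n 6 V E"
  shows "(real n / real m + 1) * (real n + 1) * (real m - 1) \<le> real (card V)"
proof -
  obtain A B where sg: "simple_graph V E" and AB: "biregular_bipartition m n V E A B"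
    and gir: "has_girth V E 6"
    using G unfolding bipartite_biregular_iff by blast
  have m: "0 < m" using dvd by (intro gr0I) simp
  obtain x y where "E x y"
    using gir unfolding has_girth_def has_cycle_of_length_def by fastforce
  then obtain v where "v \<in> B" using AB unfolding biregular_bipartition_def bipartition_def by blast
  moreover have "\<not> has_cycle_of_length V E 4" using gir unfolding has_girth_def by simp
  ultimately have moore: "1 + n * (m - 1) \<le> card B"
    using biregular_bipartition_moore_bound[OF sg AB] by blast
  have "coprime m n" using coprime_divisors[OF dvd dvd_refl] by simp
  moreover have "m dvd card B * n"
    unfolding biregular_bipartition_edge_count[OF sg AB, symmetric] by simp
  ultimately have "m dvd card B" by (simp add: coprime_dvd_mult_left_iff)
  moreover have "m dvd (n + 1) * (m - 1)" using dvd by (rule dvd_mult2)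
  ultimately have "(n + 1) * (m - 1) \<le> card B"
    using least_multiple_le[where l = "1 + n * (m - 1)"] moore m by auto
  then have "real ((n + 1) * (m - 1)) \<le> real (card B)" by (simp only: of_nat_le_iff)
  then have "(real n + 1) * (real m - 1) \<le> real (card B)"
    using m by (simp only: of_nat_mult of_nat_add of_nat_1 of_nat_diff)
  then have "(real n / real m + 1) * ((real n + 1) * (real m - 1))
      \<le> (real n / real m + 1) * real (card B)"
    by (rule mult_left_mono) simp
  then show ?thesis
    using card_vertices_biregular_bipartition[OF sg AB m] by (simp add: mult.assoc)
qed

lemma has_cycle_of_length_inj_hom:
  assumes cyc: "has_cycle_of_length V E k" and f: "inj_on f V" "f ` V \<subseteq> W"
    and hom: "\<And>x y. x \<in> V \<Longrightarrow> y \<in> V \<Longrightarrow> E x y \<Longrightarrow> F (f x) (f y)"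
  shows "has_cycle_of_length W F k"
proof -
  obtain xs where xs: "3 \<le> k" "length xs = k" "distinct xs" "set xs \<subseteq> V"
    "successively E (xs @ [hd xs])"
    using cyc unfolding has_cycle_of_length_iff by blast
  have "xs \<noteq> []" using xs(1,2) by auto
  have "successively (\<lambda>x y. F (f x) (f y)) (xs @ [hd xs])"
    by (rule successively_mono[OF xs(5)]) (use xs(4) hom hd_in_set[OF \<open>xs \<noteq> []\<close>] in auto)
  then have "successively F (map f (xs @ [hd xs]))" by (simp only: successively_map)
  then have "successively F (map f xs @ [hd (map f xs)])"
    using \<open>xs \<noteq> []\<close> by (simp add: hd_map)
  moreover have "distinct (map f xs)" using xs(3,4) f(1) by (simp add: distinct_map inj_on_subset)
  moreover have "set (map f xs) \<subseteq> W" using xs(4) f(2) by auto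
  ultimately show ?thesis
    unfolding has_cycle_of_length_iff using xs(1,2) by (intro conjI exI[of _ "map f xs"]) auto
qed

lemma bipartite_biregular_pullback:
  assumes G: "bipartite_biregular a b g V E" and h: "bij_betw h W V"
  shows "bipartite_biregular a b g W (\<lambda>u w. u \<in> W \<and> w \<in> W \<and> E (h u) (h w))"
    (is "bipartite_biregular a b g W ?F")
proof -
  obtain A B where sg: "simple_graph V E" and AB: "biregular_bipartition a b V E A B"
    and gir: "has_girth V E g"
    using G unfolding bipartite_biregular_iff by blast
  have inj: "inj_on h W" and img: "h ` W = V" using h by (auto simp: bij_betw_def)
  have sg': "simple_graph W ?F"
    using sg bij_betw_finite[OF h] unfolding simple_graph_def by auto
  have deg: "degree W ?F u = degree V E (h u)" if "u \<in> W" for u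
  proof -
    have "{y \<in> V. E (h u) y} = h ` {w \<in> W. ?F u w}" using that img by auto
    then show ?thesis unfolding degree_def using inj by (simp add: card_image inj_on_subset)
  qed
  have "biregular_bipartition a b W ?F {u \<in> W. h u \<in> A} {u \<in> W. h u \<in> B}"
    using AB img deg unfolding biregular_bipartition_def bipartition_def by auto
  moreover have "has_cycle_of_length W ?F k \<longleftrightarrow> has_cycle_of_length V E k" for k
  proof
    assume "has_cycle_of_length W ?F k"
    then show "has_cycle_of_length V E k"
      by (rule has_cycle_of_length_inj_hom) (use inj img in auto)
  next
    assume "has_cycle_of_length V E k"
    then show "has_cycle_of_length W ?F k"
      by (rule has_cycle_of_length_inj_hom[where f = "inv_into W h"])
        (use img simple_graphD[OF sg] in \<open>auto simp: inj_on_inv_into inv_into_into f_inv_into_f\<close>)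
  qed
  ultimately show ?thesis using sg' gir unfolding bipartite_biregular_iff has_girth_def by blast
qed

lemma Bc_eq_card:
  assumes G: "bipartite_biregular a b g V E"
    and minimal: "\<And>(W :: nat set) F. bipartite_biregular a b g W F \<Longrightarrow> card V \<le> card W"
  shows "Bc a b g = card V"
  unfolding Bc_def
proof (rule Least_equality)
  have "finite V" using G unfolding bipartite_biregular_iff simple_graph_def by blast
  then obtain h where "bij_betw h {0..<card V} V" using ex_bij_betw_nat_finite by blast
  then show "\<exists>(W :: nat set) F. bipartite_biregular a b g W F \<and> card W = card V"
    using bipartite_biregular_pullback[OF G] by fastforce
qed (use minimal in blast)

section \<open>Incidence graphs of partial linear spaces\<close>

definition partial_linear_space :: "'p set set \<Rightarrow> bool" where
  "partial_linear_space Bl \<longleftrightarrow>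
     (\<forall>B\<in>Bl. \<forall>C\<in>Bl. \<forall>x y. x \<noteq> y \<and> x \<in> B \<and> y \<in> B \<and> x \<in> C \<and> y \<in> C \<longrightarrow> B = C)"

lemma simple_graph_incidence:
  assumes "finite P" "finite Bl"
  shows "simple_graph (inc_vertices P Bl) (inc_edges P Bl)"
  using assms unfolding simple_graph_def inc_vertices_def inc_edges_def by auto

lemma incidence_biregular_bipartition:
  assumes blocks: "\<And>B. B \<in> Bl \<Longrightarrow> B \<subseteq> P \<and> card B = k"
    and points: "\<And>x. x \<in> P \<Longrightarrow> card {B \<in> Bl. x \<in> B} = r"
  shows "biregular_bipartition k r (inc_vertices P Bl) (inc_edges P Bl) (Inr ` Bl) (Inl ` P)"
proof -
  have "degree (inc_vertices P Bl) (inc_edges P Bl) (Inr B) = k" if "B \<in> Bl" for B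
  proof -
    have "{w \<in> inc_vertices P Bl. inc_edges P Bl (Inr B) w} = Inl ` B"
      using blocks that by (auto simp: inc_vertices_def inc_edges_def)
    then show ?thesis using blocks that unfolding degree_def by (simp add: card_image)
  qed
  moreover have "degree (inc_vertices P Bl) (inc_edges P Bl) (Inl x) = r" if "x \<in> P" for x
  proof -
    have "{w \<in> inc_vertices P Bl. inc_edges P Bl (Inl x) w} = Inr ` {B \<in> Bl. x \<in> B}"
      using that by (auto simp: inc_vertices_def inc_edges_def)
    then show ?thesis using points that unfolding degree_def by (simp add: card_image)
  qed
  ultimately show ?thesis
    unfolding biregular_bipartition_def bipartition_def inc_vertices_def inc_edges_def by auto
qed

lemma incidence_graph_no_4_cycle:
  assumes "finite P" "finite Bl" "partial_linear_space Bl"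
  shows "\<not> has_cycle_of_length (inc_vertices P Bl) (inc_edges P Bl) 4"
  unfolding has_cycle_of_length_4_iff[OF simple_graph_incidence[OF assms(1,2)]]
proof (intro notI, elim exE conjE)
  fix u c v d
  assume "u \<noteq> v" "c \<noteq> d" "inc_edges P Bl u c" "inc_edges P Bl c v"
    "inc_edges P Bl v d" "inc_edges P Bl d u"
  then show False
    using assms(3) unfolding partial_linear_space_def inc_edges_def by blast
qed

lemma incidence_graph_6_cycle:
  assumes "distinct [x, y, z]" "distinct [B1, B2, B3]"
    and "x \<in> P" "y \<in> P" "z \<in> P" "B1 \<in> Bl" "B2 \<in> Bl" "B3 \<in> Bl"
    and "x \<in> B1" "y \<in> B1" "y \<in> B2" "z \<in> B2" "z \<in> B3" "x \<in> B3"
  shows "has_cycle_of_length (inc_vertices P Bl) (inc_edges P Bl) 6"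
  unfolding has_cycle_of_length_iff
  using assms by (intro conjI exI[of _ "[Inl x, Inr B1, Inl y, Inr B2, Inl z, Inr B3]"])
    (auto simp: inc_vertices_def inc_edges_def)

lemma bipartite_biregular_incidence_graph:
  assumes "finite P" "finite Bl" "partial_linear_space Bl"
    and "\<And>B. B \<in> Bl \<Longrightarrow> B \<subseteq> P \<and> card B = k"
    and "\<And>x. x \<in> P \<Longrightarrow> card {B \<in> Bl. x \<in> B} = r"
    and "has_cycle_of_length (inc_vertices P Bl) (inc_edges P Bl) 6"
  shows "bipartite_biregular k r 6 (inc_vertices P Bl) (inc_edges P Bl)"
  using simple_graph_incidence[OF assms(1,2)] incidence_biregular_bipartition[OF assms(4,5)]
    incidence_graph_no_4_cycle[OF assms(1-3)] assms(6)
  unfolding bipartite_biregular_iff biregular_bipartition_def by (blast intro: has_girth_6I)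

section \<open>Steiner systems with a point deleted\<close>

lemma steiner_system_2D:
  assumes "steiner_system_2 k v P Bl"
  shows "finite P" and "card P = v" and "B \<in> Bl \<Longrightarrow> B \<subseteq> P" and "B \<in> Bl \<Longrightarrow> card B = k"
  using assms unfolding steiner_system_2_def by blast+

lemma steiner_system_2_block:
  assumes "steiner_system_2 k v P Bl" "x \<in> P" "y \<in> P" "x \<noteq> y"
  obtains B where "B \<in> Bl" "x \<in> B" "y \<in> B"
  using assms unfolding steiner_system_2_def by blast

lemma steiner_system_2_partial_linear_space:
  "steiner_system_2 k v P Bl \<Longrightarrow> partial_linear_space Bl"
  unfolding steiner_system_2_def partial_linear_space_def by (metis subsetD)

lemma steiner_system_2_finite_blocks: "steiner_system_2 k v P Bl \<Longrightarrow> finite Bl"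
  by (metis Pow_iff finite_Pow_iff finite_subset subsetI steiner_system_2D(1,3))

lemma steiner_system_2_replication:
  assumes S: "steiner_system_2 k v P Bl" and x: "x \<in> P"
  shows "card {B \<in> Bl. x \<in> B} * (k - 1) = v - 1"
proof -
  define T where "T = {B \<in> Bl. x \<in> B}"
  have fin: "finite T" "\<And>B. B \<in> T \<Longrightarrow> finite B"
    using steiner_system_2_finite_blocks[OF S] steiner_system_2D(1,3)[OF S]
    unfolding T_def by (auto intro: finite_subset)
  have "P - {x} = (\<Union>B\<in>T. B - {x})"
  proof
    show "P - {x} \<subseteq> (\<Union>B\<in>T. B - {x})"
    proof
      fix y assume y: "y \<in> P - {x}"
      then obtain B where "B \<in> Bl" "x \<in> B" "y \<in> B"
        using steiner_system_2_block[OF S x, of y] by blast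
      then show "y \<in> (\<Union>B\<in>T. B - {x})" using y unfolding T_def by blast
    qed
    show "(\<Union>B\<in>T. B - {x}) \<subseteq> P - {x}"
      using steiner_system_2D(3)[OF S] unfolding T_def by blast
  qed
  moreover have "(B - {x}) \<inter> (C - {x}) = {}" if "B \<in> T" "C \<in> T" "B \<noteq> C" for B C
    using that steiner_system_2_partial_linear_space[OF S]
    unfolding T_def partial_linear_space_def by blast
  then have "card (\<Union>B\<in>T. B - {x}) = (\<Sum>B\<in>T. card (B - {x}))"
    by (intro card_UN_disjoint) (use fin in auto)
  moreover have "card (B - {x}) = k - 1" if "B \<in> T" for B
    using that fin(2)[OF that] steiner_system_2D(4)[OF S] unfolding T_def by simp
  ultimately have "card (P - {x}) = card T * (k - 1)" by simp
  then show ?thesis using x steiner_system_2D(1,2)[OF S] unfolding T_def by simp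
qed

lemma del_blocks_point_degree:
  assumes S: "steiner_system_2 k v P Bl" and p: "p \<in> P" and x: "x \<in> del_points P p"
  shows "card {B \<in> del_blocks Bl p. x \<in> B} = card {B \<in> Bl. x \<in> B} - 1"
proof -
  obtain L where L: "L \<in> Bl" "x \<in> L" "p \<in> L"
    using steiner_system_2_block[OF S, of x p] p x unfolding del_points_def by blast
  have "{B \<in> del_blocks Bl p. x \<in> B} = {B \<in> Bl. x \<in> B} - {L}"
    using L x steiner_system_2_partial_linear_space[OF S]
    unfolding del_blocks_def del_points_def partial_linear_space_def by blast
  then show ?thesis using L steiner_system_2_finite_blocks[OF S] by (simp add: card_Diff_singleton)
qed

lemma del_blocks_6_cycle:
  assumes S: "steiner_system_2 k v P Bl" and p: "p \<in> P" and k: "2 \<le> k" "3 * k < v"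
  shows "has_cycle_of_length (inc_vertices (del_points P p) (del_blocks Bl p))
           (inc_edges (del_points P p) (del_blocks Bl p)) 6"
proof -
  \<comment> \<open>a triangle x, y, z none of whose sides passes through p\<close>
  note block = steiner_system_2_block[OF S]
  have unique: "B = C" if "B \<in> Bl" "C \<in> Bl" "x \<noteq> y" "x \<in> B" "y \<in> B" "x \<in> C" "y \<in> C"
    for B C x y
    using steiner_system_2_partial_linear_space[OF S] that
    unfolding partial_linear_space_def by blast
  have outside: "\<exists>z\<in>P. z \<notin> X" if "X \<subseteq> P" "card X < v" for X
    using that steiner_system_2D(2)[OF S] by (metis less_irrefl subsetI subset_antisym)
  have sub: "B \<subseteq> P" and card: "card B = k" if "B \<in> Bl" for B
    using that steiner_system_2D[OF S] by auto
  obtain x where x: "x \<in> P" "x \<noteq> p" using outside[of "{p}"] p k by auto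
  obtain Lx where Lx: "Lx \<in> Bl" "x \<in> Lx" "p \<in> Lx" using block[of x p] x p by blast
  obtain y where y: "y \<in> P" "y \<notin> Lx" using outside[of Lx] Lx sub card k by auto
  obtain B1 where B1: "B1 \<in> Bl" "x \<in> B1" "y \<in> B1" using block[of x y] x y Lx by blast
  obtain Ly where Ly: "Ly \<in> Bl" "y \<in> Ly" "p \<in> Ly" using block[of y p] y p Lx by blast
  have "card (B1 \<union> Lx \<union> Ly) \<le> 3 * k"
    using card_Un_le[of "B1 \<union> Lx" Ly] card_Un_le[of B1 Lx] card B1 Lx Ly by simp
  then obtain z where z: "z \<in> P" "z \<notin> B1" "z \<notin> Lx" "z \<notin> Ly"
    using outside[of "B1 \<union> Lx \<union> Ly"] sub B1 Lx Ly k by auto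
  obtain B2 where B2: "B2 \<in> Bl" "y \<in> B2" "z \<in> B2" using block[of y z] y z B1 by blast
  obtain B3 where B3: "B3 \<in> Bl" "z \<in> B3" "x \<in> B3" using block[of z x] z x B1 by blast
  have "p \<notin> B1" using unique[of B1 Lx x p] B1 Lx x y by blast
  moreover have "p \<notin> B2" using unique[of B2 Ly y p] B2 Ly y z Lx by blast
  moreover have "p \<notin> B3" using unique[of B3 Lx x p] B3 Lx x z by blast
  moreover have "B2 \<noteq> B3" using unique[of B2 B1 x y] B1 B2 B3 y z Lx by blast
  ultimately show ?thesis
    using x y z B1 B2 B3 Lx
    by (intro incidence_graph_6_cycle[of x y z B1 B2 B3]) (auto simp: del_points_def del_blocks_def)
qed

lemma del_blocks_degrees:
  assumes S: "steiner_system_2 k v P Bl" and p: "p \<in> P" and k: "2 \<le> k"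
    and r: "(r + 1) * (k - 1) = v - 1"
  shows "\<And>B. B \<in> del_blocks Bl p \<Longrightarrow> B \<subseteq> del_points P p \<and> card B = k"
    and "\<And>x. x \<in> del_points P p \<Longrightarrow> card {B \<in> del_blocks Bl p. x \<in> B} = r"
proof -
  fix B assume "B \<in> del_blocks Bl p"
  then show "B \<subseteq> del_points P p \<and> card B = k"
    using steiner_system_2D[OF S] unfolding del_blocks_def del_points_def by blast
next
  fix x assume x: "x \<in> del_points P p"
  have ne: "k - 1 \<noteq> 0" using k by simp
  from x have "card {B \<in> Bl. x \<in> B} * (k - 1) = (r + 1) * (k - 1)"
    using steiner_system_2_replication[OF S] r unfolding del_points_def by simp
  then have "card {B \<in> Bl. x \<in> B} = r + 1" using mult_right_cancel[OF ne] by blast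
  then show "card {B \<in> del_blocks Bl p. x \<in> B} = r" using del_blocks_point_degree[OF S p x] by simp
qed

lemma bipartite_biregular_del_blocks:
  assumes S: "steiner_system_2 k v P Bl" and p: "p \<in> P" and k: "2 \<le> k" "3 * k < v"
    and r: "(r + 1) * (k - 1) = v - 1"
  shows "bipartite_biregular k r 6 (inc_vertices (del_points P p) (del_blocks Bl p))
           (inc_edges (del_points P p) (del_blocks Bl p))"
proof (rule bipartite_biregular_incidence_graph)
  show "finite (del_points P p)" "finite (del_blocks Bl p)"
    using steiner_system_2D(1)[OF S] steiner_system_2_finite_blocks[OF S]
    unfolding del_points_def del_blocks_def by simp_all
  show "partial_linear_space (del_blocks Bl p)"
    using steiner_system_2_partial_linear_space[OF S]
    unfolding partial_linear_space_def del_blocks_def by blast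
qed (use del_blocks_degrees[OF S p k(1) r] del_blocks_6_cycle[OF S p k] in auto)

lemma card_del_blocks_incidence_graph:
  assumes S: "steiner_system_2 k v P Bl" and p: "p \<in> P" and k: "2 \<le> k"
    and r: "(r + 1) * (k - 1) = v - 1"
  shows "real (card (inc_vertices (del_points P p) (del_blocks Bl p)))
           = (real r / real k + 1) * (real r + 1) * (real k - 1)"
proof -
  have fin: "finite (del_points P p)" "finite (del_blocks Bl p)"
    using steiner_system_2D(1)[OF S] steiner_system_2_finite_blocks[OF S]
    unfolding del_points_def del_blocks_def by simp_all
  have card_points: "card (del_points P p) = (r + 1) * (k - 1)"
    using p r steiner_system_2D(1,2)[OF S] by (simp add: del_points_def)
  have "real (card (inc_vertices (del_points P p) (del_blocks Bl p)))
      = (real r / real k + 1) * real (card (del_points P p))"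
    using card_vertices_biregular_bipartition[OF simple_graph_incidence[OF fin]
        incidence_biregular_bipartition[OF del_blocks_degrees[OF S p k r]]] k
    by (simp add: card_image)
  also have "\<dots> = (real r / real k + 1) * ((real r + 1) * (real k - 1))"
    using k unfolding card_points by (simp only: of_nat_mult of_nat_add of_nat_1 of_nat_diff)
  finally show ?thesis by (simp only: mult.assoc)
qed

lemma three_mul_lt_steiner_order:
  fixes m n :: nat
  assumes "3 \<le> m" "m \<le> n" "m dvd n + 1"
  shows "3 * m < n * (m - 1) + m"
proof -
  obtain s where s: "n + 1 = m * s" using assms(3) by blast
  have "s \<noteq> 0" using s by (cases s) simp_all
  moreover have "s \<noteq> 1" using s assms(2) by auto
  ultimately have "2 * m \<le> n + 1" unfolding s by simp
  then have "5 * (m - 1) \<le> n * (m - 1)" using assms(1) by (intro mult_right_mono) auto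
  then show ?thesis using assms(1) by linarith
qed

lemma del_blocks_incidence_graph_cage:
  fixes m n :: nat
  assumes mn: "3 \<le> m" "m \<le> n" and dvd: "m dvd n + 1"
    and S: "steiner_system_2 m (n * (m - 1) + m) P Bl" and p: "p \<in> P"
  defines "V \<equiv> inc_vertices (del_points P p) (del_blocks Bl p)"
    and "E \<equiv> inc_edges (del_points P p) (del_blocks Bl p)"
  shows "bipartite_biregular m n 6 V E"
    and "real (card V) = (real n / real m + 1) * (real n + 1) * (real m - 1)"
    and "is_bb_cage m n 6 V E"
    and "real (Bc m n 6) = (real n / real m + 1) * (real n + 1) * (real m - 1)"
proof -
  have k: "2 \<le> m" "3 * m < n * (m - 1) + m"
    using three_mul_lt_steiner_order[OF mn dvd] mn(1) by simp_all
  have r: "(n + 1) * (m - 1) = n * (m - 1) + m - 1" using mn(1) by simp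
  show G: "bipartite_biregular m n 6 V E"
    unfolding V_def E_def by (rule bipartite_biregular_del_blocks[OF S p k r])
  show card: "real (card V) = (real n / real m + 1) * (real n + 1) * (real m - 1)"
    unfolding V_def by (rule card_del_blocks_incidence_graph[OF S p k(1) r])
  have "Bc m n 6 = card V"
  proof (rule Bc_eq_card[OF G])
    fix W :: "nat set" and F
    assume "bipartite_biregular m n 6 W F"
    then have "(real n / real m + 1) * (real n + 1) * (real m - 1) \<le> real (card W)"
      by (rule card_bipartite_biregular_girth_6_ge[OF dvd])
    then show "card V \<le> card W" unfolding card[symmetric] by simp
  qed
  then show "is_bb_cage m n 6 V E"
    and "real (Bc m n 6) = (real n / real m + 1) * (real n + 1) * (real m - 1)"
    using G card unfolding is_bb_cage_def by simp_all
qed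

theorem mainTheorem1:
  fixes m n :: nat
  assumes "3 \<le> m" and "m \<le> n" and "[int n = -1] (mod int m)"
  shows "(\<forall>(V :: 'a set) E. bipartite_biregular m n 6 V E \<longrightarrow>
            real (card V) \<ge> (real n / real m + 1) * (real n + 1) * (real m - 1))
       \<and> (\<forall>(P :: 'p set) Bl p. steiner_system_2 m (n * (m - 1) + m) P Bl \<and> p \<in> P \<longrightarrow>
            bipartite_biregular m n 6 (inc_vertices (del_points P p) (del_blocks Bl p))
                                      (inc_edges (del_points P p) (del_blocks Bl p))
          \<and> real (card (inc_vertices (del_points P p) (del_blocks Bl p)))
              = (real n / real m + 1) * (real n + 1) * (real m - 1)
          \<and> is_bb_cage m n 6 (inc_vertices (del_points P p) (del_blocks Bl p))
                             (inc_edges (del_points P p) (del_blocks Bl p))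
          \<and> real (Bc m n 6) = (real n / real m + 1) * (real n + 1) * (real m - 1))"
proof -
  have "int m dvd int (n + 1)" using assms(3) by (simp add: cong_iff_dvd_diff add.commute)
  then have dvd: "m dvd n + 1" by (simp only: of_nat_dvd_iff)
  show ?thesis
    using card_bipartite_biregular_girth_6_ge[OF dvd]
      del_blocks_incidence_graph_cage[OF assms(1,2) dvd] by fastforce
qed

end
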